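(* Let $(X,T),(Y,S)$ be topological dynamical systems and $f\in C(X\times Y)$. If $(Y,S)$ has the periodic specification property and $(X,T)$ has at least one periodic point, then $\beta(f)\ge\delta(f)$. In particular this holds if both $(X,T)$ and $(Y,S)$ have the periodic specification property.
   Context: A topological dynamical system $(X,T)$: $X$ compact metrizable, $T$ a homeomorphism. $\pi_Y(x,y)=y$, $\mathbb{A}_kf(x,y)=\frac1k\sum_{j=0}^{k-1}f(T^jx,S^jy)$; $R_f=\{(x,y):\lim_k\mathbb{A}_kf(x,y)\text{ exists}\}$; $\beta(f)=\sup_{y\in\pi_Y(R_f)}\inf_{x:(x,y)\in R_f}\lim_k\mathbb{A}_kf(x,y)$; $\delta(f)=\limsup_k\max_{y\in Y}\min_{x\in X}\mathbb{A}_kf(x,y)$. A specification is $\xi=(x_i,[a_i,b_i])_{i=1}^n$ with integers $a_1\le b_1<a_2\le\dots\le b_n$; $D$-spaced if $a_{i+1}-b_i\ge D$; $x$ $\eta$-traces $\xi$ if $d(T^jx,T^jx_i)<\eta$ for all $i$ and $j\in[a_i,b_i]$ ($d$ a compatible metric). Periodic specification property: for each $\eta>0$ there is $D(\eta)\in\mathbb{N}$ such that every $D(\eta)$-spaced specification has an $\eta$-tracing $x'$ with $T^{b_n-a_1+D(\eta)}x'=x'$. *)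

theory Defs
  imports "HOL-Analysis.Analysis"
begin

definition tds :: "'a::metric_space set \<Rightarrow> ('a \<Rightarrow> 'a) \<Rightarrow> bool" where
  "tds X T \<longleftrightarrow> compact X \<and> X \<noteq> {} \<and> (\<exists>g. homeomorphism X X T g)"

definition zit :: "'a set \<Rightarrow> ('a \<Rightarrow> 'a) \<Rightarrow> int \<Rightarrow> 'a \<Rightarrow> 'a" where
  "zit X T j x = (if 0 \<le> j then (T ^^ nat j) x else (inv_into X T ^^ nat (- j)) x)"

definition has_periodic_point :: "'a set \<Rightarrow> ('a \<Rightarrow> 'a) \<Rightarrow> bool" where
  "has_periodic_point X T \<longleftrightarrow> (\<exists>x\<in>X. \<exists>n::nat. n \<ge> 1 \<and> (T ^^ n) x = x)"

definition is_spec :: "'a set \<Rightarrow> ('a \<times> int \<times> int) list \<Rightarrow> bool" where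
  "is_spec X \<xi> \<longleftrightarrow> length \<xi> \<ge> 1
     \<and> (\<forall>i < length \<xi>. fst (\<xi> ! i) \<in> X \<and> fst (snd (\<xi> ! i)) \<le> snd (snd (\<xi> ! i)))
     \<and> (\<forall>i. i + 1 < length \<xi> \<longrightarrow> snd (snd (\<xi> ! i)) < fst (snd (\<xi> ! (i + 1))))"

definition spaced :: "nat \<Rightarrow> ('a \<times> int \<times> int) list \<Rightarrow> bool" where
  "spaced D \<xi> \<longleftrightarrow> (\<forall>i. i + 1 < length \<xi> \<longrightarrow>
       fst (snd (\<xi> ! (i + 1))) - snd (snd (\<xi> ! i)) \<ge> int D)"

definition traces :: "'a::metric_space set \<Rightarrow> ('a \<Rightarrow> 'a) \<Rightarrow> real \<Rightarrow> 'a \<Rightarrow> ('a \<times> int \<times> int) list \<Rightarrow> bool" where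
  "traces X T \<eta> x \<xi> \<longleftrightarrow> (\<forall>i < length \<xi>. \<forall>j \<in> {fst (snd (\<xi> ! i)) .. snd (snd (\<xi> ! i))}.
       dist (zit X T j x) (zit X T j (fst (\<xi> ! i))) < \<eta>)"

definition periodic_specification :: "'a::metric_space set \<Rightarrow> ('a \<Rightarrow> 'a) \<Rightarrow> bool" where
  "periodic_specification X T \<longleftrightarrow> (\<forall>\<eta>>0. \<exists>D::nat. \<forall>\<xi>. is_spec X \<xi> \<and> spaced D \<xi> \<longrightarrow>
      (\<exists>x'\<in>X. traces X T \<eta> x' \<xi> \<and>
         zit X T (snd (snd (last \<xi>)) - fst (snd (hd \<xi>)) + int D) x' = x'))"

definition avg :: "('a \<Rightarrow> 'a) \<Rightarrow> ('b \<Rightarrow> 'b) \<Rightarrow> ('a \<times> 'b \<Rightarrow> real) \<Rightarrow> nat \<Rightarrow> 'a \<Rightarrow> 'b \<Rightarrow> real" where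
  "avg T S f k x y = (\<Sum>j<k. f ((T ^^ j) x, (S ^^ j) y)) / real k"

definition Rset :: "'a set \<Rightarrow> ('a \<Rightarrow> 'a) \<Rightarrow> 'b set \<Rightarrow> ('b \<Rightarrow> 'b) \<Rightarrow> ('a \<times> 'b \<Rightarrow> real) \<Rightarrow> ('a \<times> 'b) set" where
  "Rset X T Y S f = {(x, y). x \<in> X \<and> y \<in> Y \<and> convergent (\<lambda>k. avg T S f k x y)}"

definition beta :: "'a set \<Rightarrow> ('a \<Rightarrow> 'a) \<Rightarrow> 'b set \<Rightarrow> ('b \<Rightarrow> 'b) \<Rightarrow> ('a \<times> 'b \<Rightarrow> real) \<Rightarrow> real" where
  "beta X T Y S f = (SUP y \<in> snd ` Rset X T Y S f.
      INF x \<in> {x. (x, y) \<in> Rset X T Y S f}. lim (\<lambda>k. avg T S f k x y))"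

definition delta :: "'a set \<Rightarrow> ('a \<Rightarrow> 'a) \<Rightarrow> 'b set \<Rightarrow> ('b \<Rightarrow> 'b) \<Rightarrow> ('a \<times> 'b \<Rightarrow> real) \<Rightarrow> ereal" where
  "delta X T Y S f = limsup (\<lambda>k. ereal (SUP y \<in> Y. INF x \<in> X. avg T S f k x y))"

end

theory Submission
  imports Defs
begin

(* Fix \<epsilon> > 0 and y \<in> Y. Periodic specification gives a point y' of period k + D whose orbit
   stays \<eta>-close to that of y for k steps, where D depends only on \<eta> (hence only on \<epsilon>, by
   uniform continuity of f). For every x, the Birkhoff sum of f along (x, y') over one period is
   then at least k (min_x A_k f(x, y) - \<epsilon>) - D max |f|; as y' is periodic, this bound carries
   over to all multiples of the period and so to the limit of A_k f(x, y') whenever it exists.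
   A periodic point of T makes the fibre of R_f over y' nonempty, so
   \<beta>(f) \<ge> min_x A_k f(x, y) - \<epsilon> - O(1/k), and \<delta>(f) \<le> \<beta>(f) follows on taking the sup over y
   and the limsup in k. *)

lemma funpow_image_subset: "U ` Z \<subseteq> Z \<Longrightarrow> (U ^^ n) ` Z \<subseteq> Z"
  by (induction n) auto

definition birkhoff_sum :: "('c \<Rightarrow> 'c) \<Rightarrow> ('c \<Rightarrow> real) \<Rightarrow> nat \<Rightarrow> 'c \<Rightarrow> real" where
  "birkhoff_sum U g n z = (\<Sum>i<n. g ((U ^^ i) z))"

lemma birkhoff_sum_add:
  "birkhoff_sum U g (m + n) z = birkhoff_sum U g m z + birkhoff_sum U g n ((U ^^ m) z)"
proof (induction n)
  case (Suc n)
  have "(U ^^ (m + n)) z = (U ^^ n) ((U ^^ m) z)"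
    by (metis add.commute comp_apply funpow_add)
  with Suc show ?case by (simp add: birkhoff_sum_def)
qed (simp add: birkhoff_sum_def)

lemma abs_birkhoff_sum_le:
  assumes "U ` Z \<subseteq> Z" and "z \<in> Z" and "\<And>w. w \<in> Z \<Longrightarrow> \<bar>g w\<bar> \<le> M"
  shows "\<bar>birkhoff_sum U g n z\<bar> \<le> n * M"
proof -
  have "(U ^^ i) z \<in> Z" for i
    using funpow_image_subset[OF assms(1)] assms(2) by blast
  then have "\<bar>birkhoff_sum U g n z\<bar> \<le> (\<Sum>i<n. M)"
    unfolding birkhoff_sum_def by (intro order.trans[OF sum_abs] sum_mono assms(3))
  then show ?thesis by simp
qed

lemma abs_birkhoff_sum_diff_le:
  assumes "\<And>i. i < n \<Longrightarrow> \<bar>g ((U ^^ i) z) - g ((U ^^ i) w)\<bar> \<le> \<epsilon>"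
  shows "\<bar>birkhoff_sum U g n z - birkhoff_sum U g n w\<bar> \<le> n * \<epsilon>"
proof -
  have "\<bar>birkhoff_sum U g n z - birkhoff_sum U g n w\<bar> \<le> (\<Sum>i<n. \<epsilon>)"
    unfolding birkhoff_sum_def sum_subtractf[symmetric]
    by (intro order.trans[OF sum_abs] sum_mono assms) simp
  then show ?thesis by simp
qed

lemma birkhoff_sum_periodic:
  assumes "(U ^^ p) z = z"
  shows "birkhoff_sum U g (n * p + r) z = n * birkhoff_sum U g p z + birkhoff_sum U g r z"
proof (induction n)
  case (Suc n)
  then show ?case
    using birkhoff_sum_add[of U g p "n * p + r" z] assms
    by (simp add: algebra_simps)
qed simp

lemma averages_tendsto_of_bounded_deviation:
  fixes s :: "nat \<Rightarrow> real" and A B :: real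
  assumes "\<And>n. \<bar>s n - n * A\<bar> \<le> B"
  shows "(\<lambda>n. s n / n) \<longlonglongrightarrow> A"
proof -
  have "(\<lambda>n. (s n - n * A) / n) \<longlonglongrightarrow> 0"
  proof (rule Lim_null_comparison)
    show "\<forall>\<^sub>F n in sequentially. norm ((s n - n * A) / n) \<le> B / n"
      using assms by (auto intro!: always_eventually divide_right_mono simp: abs_div)
  qed (rule lim_const_over_n)
  then have "(\<lambda>n. A + (s n - n * A) / n) \<longlonglongrightarrow> A + 0"
    by (intro tendsto_add tendsto_const)
  moreover have "\<forall>\<^sub>F n in sequentially. A + (s n - n * A) / n = s n / n"
    by (rule eventually_sequentiallyI[of 1]) (simp add: field_simps)
  ultimately show ?thesis
    by (simp add: tendsto_cong)
qed

lemma birkhoff_average_periodic_tendsto: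
  assumes "(U ^^ p) z = z" and "p > 0"
  shows "(\<lambda>n. birkhoff_sum U g n z / n) \<longlonglongrightarrow> birkhoff_sum U g p z / p"
proof (rule averages_tendsto_of_bounded_deviation)
  define A where "A = birkhoff_sum U g p z / p"
  define B where "B = (\<Sum>r<p. \<bar>birkhoff_sum U g r z - r * A\<bar>)"
  fix n
  have "birkhoff_sum U g n z = (n div p) * birkhoff_sum U g p z + birkhoff_sum U g (n mod p) z"
    using birkhoff_sum_periodic[OF assms(1), of g "n div p" "n mod p"] by simp
  moreover have "n * A = (n div p) * birkhoff_sum U g p z + (n mod p) * A"
  proof -
    have "n * A = (real (n mod p) + real p * real (n div p)) * A"
      by (metis mod_mult_div_eq of_nat_add of_nat_mult)
    also have "\<dots> = (n div p) * (p * A) + (n mod p) * A"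
      by (simp only: algebra_simps)
    also have "p * A = birkhoff_sum U g p z"
      using assms(2) by (simp add: A_def)
    finally show ?thesis .
  qed
  ultimately have "birkhoff_sum U g n z - n * A = birkhoff_sum U g (n mod p) z - (n mod p) * A"
    by simp
  also have "\<bar>\<dots>\<bar> \<le> B"
    unfolding B_def using assms(2) by (intro member_le_sum) auto
  finally show "\<bar>birkhoff_sum U g n z - n * A\<bar> \<le> B" .
qed

lemma birkhoff_sum_blocks_ge:
  assumes "(U ^^ p) ` Z \<subseteq> Z" and "\<And>w. w \<in> Z \<Longrightarrow> c \<le> birkhoff_sum U g p w" and "z \<in> Z"
  shows "n * c \<le> birkhoff_sum U g (n * p) z"
  using assms(3)
proof (induction n arbitrary: z)
  case (Suc n)
  have "(U ^^ p) z \<in> Z" using Suc.prems assms(1) by blast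
  then show ?case
    using Suc.IH[OF \<open>(U ^^ p) z \<in> Z\<close>] assms(2)[OF Suc.prems] birkhoff_sum_add[of U g p "n * p" z]
    by (simp add: algebra_simps)
qed (simp add: birkhoff_sum_def)

lemma birkhoff_average_limit_ge:
  assumes "(U ^^ p) ` Z \<subseteq> Z" and "\<And>w. w \<in> Z \<Longrightarrow> c \<le> birkhoff_sum U g p w"
    and "z \<in> Z" and "p > 0"
    and "(\<lambda>n. birkhoff_sum U g n z / n) \<longlonglongrightarrow> L"
  shows "c / p \<le> L"
proof -
  have "strict_mono (\<lambda>n. Suc n * p)"
    using assms(4) by (intro strict_monoI) simp
  with assms(5) have "(\<lambda>n. birkhoff_sum U g (Suc n * p) z / (Suc n * p)) \<longlonglongrightarrow> L"
    using LIMSEQ_subseq_LIMSEQ unfolding comp_def by fastforce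
  moreover have "c / p \<le> birkhoff_sum U g (Suc n * p) z / (Suc n * p)" for n
  proof -
    have "c / p = (Suc n * c) / (Suc n * p)"
      unfolding of_nat_mult by (rule mult_divide_mult_cancel_left[symmetric]) simp
    also have "\<dots> \<le> birkhoff_sum U g (Suc n * p) z / (Suc n * p)"
      using birkhoff_sum_blocks_ge[OF assms(1-3), of "Suc n"] by (intro divide_right_mono) auto
    finally show ?thesis .
  qed
  ultimately show ?thesis
    by (intro tendsto_lowerbound) auto
qed

lemma funpow_map_prod:
  fixes T :: "'a \<Rightarrow> 'a" and S :: "'b \<Rightarrow> 'b"
  shows "(map_prod T S ^^ n) (x, y) = ((T ^^ n) x, (S ^^ n) y)"
  by (induction n) auto

lemma avg_eq_birkhoff_average: "avg T S f k x y = birkhoff_sum (map_prod T S) f k (x, y) / k"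
  by (simp add: avg_def birkhoff_sum_def funpow_map_prod)

lemma abs_lim_le:
  fixes s :: "nat \<Rightarrow> real"
  assumes "convergent s" and "\<And>n. \<bar>s n\<bar> \<le> M"
  shows "\<bar>lim s\<bar> \<le> M"
proof -
  have "(\<lambda>n. \<bar>s n\<bar>) \<longlonglongrightarrow> \<bar>lim s\<bar>"
    using assms(1) by (intro tendsto_rabs) (simp add: convergent_LIMSEQ_iff)
  then show ?thesis
    using assms(2) by (intro tendsto_upperbound) auto
qed

lemma Limsup_le_of_le_plus_inverse:
  fixes a :: "nat \<Rightarrow> real"
  assumes "\<And>k. k > 0 \<Longrightarrow> a k \<le> b + C / k"
  shows "limsup (\<lambda>k. ereal (a k)) \<le> ereal b"
proof -
  have "(\<lambda>k. ereal (b + C / k)) \<longlonglongrightarrow> ereal (b + 0)"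
    by (intro tendsto_intros lim_const_over_n)
  then have "limsup (\<lambda>k. ereal (b + C / k)) = ereal b"
    by (simp add: lim_imp_Limsup)
  moreover have "limsup (\<lambda>k. ereal (a k)) \<le> limsup (\<lambda>k. ereal (b + C / k))"
    using assms by (intro Limsup_mono eventually_sequentiallyI[of 1]) auto
  ultimately show ?thesis
    by simp
qed

lemma periodic_specification_periodic_shadow:
  assumes "periodic_specification Y S" and "\<eta> > 0"
  obtains D :: nat where "\<And>k y. y \<in> Y \<Longrightarrow>
    \<exists>y'\<in>Y. (S ^^ (k + D)) y' = y' \<and> (\<forall>i\<le>k. dist ((S ^^ i) y') ((S ^^ i) y) < \<eta>)"
proof -
  obtain D :: nat where D: "\<And>\<xi>. is_spec Y \<xi> \<and> spaced D \<xi> \<Longrightarrow> \<exists>y'\<in>Y. traces Y S \<eta> y' \<xi> \<and>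
      zit Y S (snd (snd (last \<xi>)) - fst (snd (hd \<xi>)) + int D) y' = y'"
    using assms unfolding periodic_specification_def by blast
  have "\<exists>y'\<in>Y. (S ^^ (k + D)) y' = y' \<and> (\<forall>i\<le>k. dist ((S ^^ i) y') ((S ^^ i) y) < \<eta>)"
    if "y \<in> Y" for k y
  proof -
    have "is_spec Y [(y, 0, int k)] \<and> spaced D [(y, 0, int k)]"
      using that by (simp add: is_spec_def spaced_def)
    then obtain y' where "y' \<in> Y" and traces: "traces Y S \<eta> y' [(y, 0, int k)]"
      and periodic: "zit Y S (int k + int D) y' = y'"
      using D by fastforce
    have "dist ((S ^^ i) y') ((S ^^ i) y) < \<eta>" if "i \<le> k" for i
    proof -
      have "dist (zit Y S (int i) y') (zit Y S (int i) y) < \<eta>"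
        using traces that unfolding traces_def by auto
      then show ?thesis
        by (simp add: zit_def)
    qed
    moreover have "(S ^^ (k + D)) y' = y'"
      using periodic by (simp add: zit_def nat_add_distrib)
    ultimately show ?thesis
      using \<open>y' \<in> Y\<close> by blast
  qed
  then show ?thesis
    using that by blast
qed

locale product_tds =
  fixes X :: "'a::metric_space set" and T :: "'a \<Rightarrow> 'a"
    and Y :: "'b::metric_space set" and S :: "'b \<Rightarrow> 'b"
    and f :: "'a \<times> 'b \<Rightarrow> real"
  assumes tds_X: "tds X T" and tds_Y: "tds Y S"
    and continuous_f: "continuous_on (X \<times> Y) f"
begin

lemma T_maps_to: "T ` X \<subseteq> X" and S_maps_to: "S ` Y \<subseteq> Y"
  using tds_X tds_Y unfolding tds_def homeomorphism_def by auto

lemma product_maps_to: "map_prod T S ` (X \<times> Y) \<subseteq> X \<times> Y"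
  using T_maps_to S_maps_to by auto

lemma Y_nonempty: "Y \<noteq> {}"
  using tds_Y unfolding tds_def by blast

lemma compact_product: "compact (X \<times> Y)"
  using tds_X tds_Y unfolding tds_def by (blast intro: compact_Times)

lemma f_bounded:
  obtains M where "0 \<le> M" and "\<And>z. z \<in> X \<times> Y \<Longrightarrow> \<bar>f z\<bar> \<le> M"
proof -
  have "bounded (f ` (X \<times> Y))"
    by (intro compact_imp_bounded compact_continuous_image continuous_f compact_product)
  then obtain M where "\<And>z. z \<in> X \<times> Y \<Longrightarrow> \<bar>f z\<bar> \<le> M"
    unfolding bounded_iff by auto
  then show ?thesis
    using that[of "max M 0"] by force
qed

lemma avg_bounded:
  obtains M where "\<And>k x y. x \<in> X \<Longrightarrow> y \<in> Y \<Longrightarrow> \<bar>avg T S f k x y\<bar> \<le> M"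
proof -
  obtain M where "0 \<le> M" and M: "\<And>z. z \<in> X \<times> Y \<Longrightarrow> \<bar>f z\<bar> \<le> M"
    using f_bounded by blast
  have "\<bar>avg T S f k x y\<bar> \<le> M" if "x \<in> X" "y \<in> Y" for k x y
  proof -
    have "\<bar>birkhoff_sum (map_prod T S) f k (x, y)\<bar> \<le> k * M"
      using that by (intro abs_birkhoff_sum_le[OF product_maps_to _ M]) auto
    then show ?thesis
      using \<open>0 \<le> M\<close> by (cases "k = 0") (auto simp: avg_eq_birkhoff_average abs_div field_simps)
  qed
  then show ?thesis
    using that by blast
qed

lemma bdd_below_avg: "y \<in> Y \<Longrightarrow> bdd_below ((\<lambda>x. avg T S f k x y) ` X)"
  using avg_bounded by (metis abs_le_D2 bdd_belowI2 minus_le_iff)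

lemma f_uniformly_continuous_in_Y:
  assumes "\<epsilon> > 0"
  obtains \<eta> where "\<eta> > 0"
    and "\<And>x y y'. x \<in> X \<Longrightarrow> y \<in> Y \<Longrightarrow> y' \<in> Y \<Longrightarrow> dist y' y < \<eta> \<Longrightarrow> \<bar>f (x, y') - f (x, y)\<bar> \<le> \<epsilon>"
proof -
  have "uniformly_continuous_on (X \<times> Y) f"
    by (rule compact_uniformly_continuous[OF continuous_f compact_product])
  then obtain \<eta> where "\<eta> > 0" and uc:
    "\<And>z z'. z \<in> X \<times> Y \<Longrightarrow> z' \<in> X \<times> Y \<Longrightarrow> dist z' z < \<eta> \<Longrightarrow> \<bar>f z' - f z\<bar> < \<epsilon>"
    using assms unfolding uniformly_continuous_on_def dist_real_def by metis
  have "\<bar>f (x, y') - f (x, y)\<bar> \<le> \<epsilon>" if "x \<in> X" "y \<in> Y" "y' \<in> Y" "dist y' y < \<eta>" for x y y'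
    using uc[of "(x, y)" "(x, y')"] that by (simp add: dist_Pair_Pair)
  with \<open>\<eta> > 0\<close> show ?thesis
    using that by blast
qed

lemma beta_ge_fibre_lower_bound:
  assumes "(x0, y) \<in> Rset X T Y S f"
    and "\<And>x. (x, y) \<in> Rset X T Y S f \<Longrightarrow> a \<le> lim (\<lambda>k. avg T S f k x y)"
  shows "a \<le> beta X T Y S f"
proof -
  define R where "R = Rset X T Y S f"
  define fibre_inf where "fibre_inf y = (INF x \<in> {x. (x, y) \<in> R}. lim (\<lambda>k. avg T S f k x y))" for y
  obtain M where M: "\<And>k x y. x \<in> X \<Longrightarrow> y \<in> Y \<Longrightarrow> \<bar>avg T S f k x y\<bar> \<le> M"
    using avg_bounded by blast
  have lim_bounded: "\<bar>lim (\<lambda>k. avg T S f k x y)\<bar> \<le> M" if "(x, y) \<in> R" for x y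
    using that M by (intro abs_lim_le) (auto simp: R_def Rset_def)
  have bdd_fibre: "bdd_below ((\<lambda>x. lim (\<lambda>k. avg T S f k x y)) ` {x. (x, y) \<in> R})" for y
    using lim_bounded by (intro bdd_belowI2[of _ "-M"]) (force simp: abs_le_iff)
  have "fibre_inf y \<le> M" if "y \<in> snd ` R" for y
  proof -
    obtain x where "(x, y) \<in> R"
      using \<open>y \<in> snd ` R\<close> by force
    then have "fibre_inf y \<le> lim (\<lambda>k. avg T S f k x y)"
      unfolding fibre_inf_def by (intro cINF_lower bdd_fibre) auto
    then show ?thesis
      using lim_bounded[OF \<open>(x, y) \<in> R\<close>] by linarith
  qed
  then have "fibre_inf y \<le> beta X T Y S f"
    using assms(1) unfolding beta_def fibre_inf_def[symmetric] R_def[symmetric]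
    by (intro cSUP_upper bdd_aboveI2) force+
  moreover have "a \<le> fibre_inf y"
    using assms unfolding fibre_inf_def R_def by (intro cINF_greatest) auto
  ultimately show ?thesis
    by linarith
qed

lemma beta_ge_periodic_fibre:
  assumes "has_periodic_point X T" and "y \<in> Y" and "(S ^^ p) y = y" and "p > 0"
    and "\<And>x. x \<in> X \<Longrightarrow> c \<le> birkhoff_sum (map_prod T S) f p (x, y)"
  shows "c / p \<le> beta X T Y S f"
proof -
  obtain x0 q where "x0 \<in> X" "q > 0" "(T ^^ q) x0 = x0"
    using assms(1) unfolding has_periodic_point_def by (auto simp: Suc_le_eq)
  have "(map_prod T S ^^ (q * p)) (x0, y) = (x0, y)"
    using funpow_mod_eq[where f = T and m = "q * p", OF \<open>(T ^^ q) x0 = x0\<close>]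
      funpow_mod_eq[where f = S and m = "q * p", OF assms(3)]
    by (simp add: funpow_map_prod)
  then have "convergent (\<lambda>k. avg T S f k x0 y)"
    using birkhoff_average_periodic_tendsto[where g = f] \<open>q > 0\<close> assms(4)
    unfolding avg_eq_birkhoff_average convergent_def by (meson nat_0_less_mult_iff)
  with \<open>x0 \<in> X\<close> assms(2) have "(x0, y) \<in> Rset X T Y S f"
    by (simp add: Rset_def)
  then show ?thesis
  proof (rule beta_ge_fibre_lower_bound)
    fix x assume "(x, y) \<in> Rset X T Y S f"
    then have "x \<in> X" and "(\<lambda>k. avg T S f k x y) \<longlonglongrightarrow> lim (\<lambda>k. avg T S f k x y)"
      by (auto simp: Rset_def convergent_LIMSEQ_iff)
    moreover have "(map_prod T S ^^ p) ` (X \<times> {y}) \<subseteq> X \<times> {y}"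
      using funpow_image_subset[OF T_maps_to] assms(3) by (force simp: funpow_map_prod)
    ultimately show "c / p \<le> lim (\<lambda>k. avg T S f k x y)"
      using assms(4,5)
      by (intro birkhoff_average_limit_ge[where Z = "X \<times> {y}"]) (auto simp: avg_eq_birkhoff_average)
  qed
qed

lemma birkhoff_sum_shadow_ge:
  assumes "x \<in> X" and "y' \<in> Y" and M: "\<And>z. z \<in> X \<times> Y \<Longrightarrow> \<bar>f z\<bar> \<le> M"
    and close: "\<And>i. i < k \<Longrightarrow> \<bar>f ((T ^^ i) x, (S ^^ i) y') - f ((T ^^ i) x, (S ^^ i) y)\<bar> \<le> \<epsilon>"
  shows "birkhoff_sum (map_prod T S) f k (x, y) - k * \<epsilon> - D * M
    \<le> birkhoff_sum (map_prod T S) f (k + D) (x, y')"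
proof -
  have "\<bar>birkhoff_sum (map_prod T S) f k (x, y') - birkhoff_sum (map_prod T S) f k (x, y)\<bar> \<le> k * \<epsilon>"
    using close by (intro abs_birkhoff_sum_diff_le) (simp add: funpow_map_prod)
  moreover have "(map_prod T S ^^ k) (x, y') \<in> X \<times> Y"
    using funpow_image_subset[OF product_maps_to] assms(1,2) by blast
  then have "\<bar>birkhoff_sum (map_prod T S) f D ((map_prod T S ^^ k) (x, y'))\<bar> \<le> D * M"
    by (intro abs_birkhoff_sum_le[OF product_maps_to _ M])
  ultimately show ?thesis
    unfolding birkhoff_sum_add by linarith
qed

lemma INF_avg_le_beta:
  assumes "periodic_specification Y S" and "has_periodic_point X T" and "\<epsilon> > 0"
  obtains C where
    "\<And>k y. k > 0 \<Longrightarrow> y \<in> Y \<Longrightarrow> (INF x \<in> X. avg T S f k x y) \<le> beta X T Y S f + \<epsilon> + C / k"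
proof -
  define \<beta> where "\<beta> = beta X T Y S f"
  obtain M where M: "\<And>z. z \<in> X \<times> Y \<Longrightarrow> \<bar>f z\<bar> \<le> M"
    using f_bounded by blast
  obtain \<eta> where "\<eta> > 0" and uc: "\<And>x y y'. x \<in> X \<Longrightarrow> y \<in> Y \<Longrightarrow> y' \<in> Y \<Longrightarrow>
      dist y' y < \<eta> \<Longrightarrow> \<bar>f (x, y') - f (x, y)\<bar> \<le> \<epsilon>"
    using f_uniformly_continuous_in_Y[OF assms(3)] by blast
  obtain D where D: "\<And>k y. y \<in> Y \<Longrightarrow>
    \<exists>y'\<in>Y. (S ^^ (k + D)) y' = y' \<and> (\<forall>i\<le>k. dist ((S ^^ i) y') ((S ^^ i) y) < \<eta>)"
    using periodic_specification_periodic_shadow[OF assms(1) \<open>\<eta> > 0\<close>] by blast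
  have "(INF x \<in> X. avg T S f k x y) \<le> \<beta> + \<epsilon> + D * (\<bar>\<beta>\<bar> + M) / k" if "k > 0" "y \<in> Y" for k y
  proof -
    define m where "m = (INF x \<in> X. avg T S f k x y)"
    obtain y' where "y' \<in> Y" and periodic: "(S ^^ (k + D)) y' = y'"
      and shadow: "\<And>i. i \<le> k \<Longrightarrow> dist ((S ^^ i) y') ((S ^^ i) y) < \<eta>"
      using D[OF \<open>y \<in> Y\<close>] by blast
    have "k * m - k * \<epsilon> - D * M \<le> birkhoff_sum (map_prod T S) f (k + D) (x, y')" if "x \<in> X" for x
    proof -
      have "m \<le> avg T S f k x y"
        unfolding m_def by (intro cINF_lower bdd_below_avg \<open>x \<in> X\<close> \<open>y \<in> Y\<close>)
      then have "k * m \<le> birkhoff_sum (map_prod T S) f k (x, y)"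
        using \<open>k > 0\<close> by (simp add: avg_eq_birkhoff_average field_simps)
      moreover have close: "\<bar>f ((T ^^ i) x, (S ^^ i) y') - f ((T ^^ i) x, (S ^^ i) y)\<bar> \<le> \<epsilon>"
        if "i < k" for i
        using uc funpow_image_subset[OF T_maps_to] funpow_image_subset[OF S_maps_to]
          shadow[of i] that \<open>x \<in> X\<close> \<open>y \<in> Y\<close> \<open>y' \<in> Y\<close> by (simp add: image_subset_iff)
      moreover have "birkhoff_sum (map_prod T S) f k (x, y) - k * \<epsilon> - D * M
          \<le> birkhoff_sum (map_prod T S) f (k + D) (x, y')"
        using \<open>x \<in> X\<close> \<open>y' \<in> Y\<close> M close by (rule birkhoff_sum_shadow_ge)
      ultimately show ?thesis
        by linarith
    qed
    then have "(k * m - k * \<epsilon> - D * M) / (k + D) \<le> \<beta>"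
      unfolding \<beta>_def using beta_ge_periodic_fibre[OF assms(2) \<open>y' \<in> Y\<close> periodic] \<open>k > 0\<close> by simp
    then have "k * m - k * \<epsilon> - D * M \<le> (k + D) * \<beta>"
      using \<open>k > 0\<close> by (simp add: pos_divide_le_eq mult.commute)
    also have "\<dots> \<le> k * \<beta> + D * \<bar>\<beta>\<bar>"
      by (simp add: distrib_right mult_left_mono)
    finally have "k * m \<le> k * (\<beta> + \<epsilon>) + D * (\<bar>\<beta>\<bar> + M)"
      by (simp add: algebra_simps)
    then show ?thesis
      using \<open>k > 0\<close> unfolding m_def by (simp add: field_simps)
  qed
  then show ?thesis
    using that unfolding \<beta>_def by blast
qed

lemma delta_le_beta:
  assumes "periodic_specification Y S" and "has_periodic_point X T"
  shows "delta X T Y S f \<le> ereal (beta X T Y S f)"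
proof (rule ereal_le_epsilon2)
  fix \<epsilon> :: real
  assume "\<epsilon> > 0"
  then obtain C where C: "\<And>k y. k > 0 \<Longrightarrow> y \<in> Y \<Longrightarrow>
      (INF x \<in> X. avg T S f k x y) \<le> beta X T Y S f + \<epsilon> + C / k"
    using INF_avg_le_beta[OF assms] by blast
  have "(SUP y \<in> Y. INF x \<in> X. avg T S f k x y) \<le> (beta X T Y S f + \<epsilon>) + C / k" if "k > 0" for k
    using C[OF that] Y_nonempty by (intro cSUP_least) auto
  then have "delta X T Y S f \<le> ereal (beta X T Y S f + \<epsilon>)"
    unfolding delta_def by (rule Limsup_le_of_le_plus_inverse)
  then show "delta X T Y S f \<le> ereal (beta X T Y S f) + ereal \<epsilon>"
    by simp
qed

end

theorem theorem2p15:
  fixes X :: "'a::metric_space set" and T :: "'a \<Rightarrow> 'a"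
    and Y :: "'b::metric_space set" and S :: "'b \<Rightarrow> 'b"
    and f :: "'a \<times> 'b \<Rightarrow> real"
  assumes "tds X T" and "tds Y S"
    and "continuous_on (X \<times> Y) f"
    and "periodic_specification Y S"
    and "has_periodic_point X T"
  shows "ereal (beta X T Y S f) \<ge> delta X T Y S f"
proof -
  interpret product_tds X T Y S f
    using assms(1-3) by unfold_locales
  show ?thesis
    using delta_le_beta[OF assms(4,5)] by simp
qed

end
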